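(* Every unary FA-presentable partial order $(X,\le)$ decomposes as a finite disjoint union of trivial partial orders, countably infinite ascending chains, countably infinite descending chains, and countably infinite anti-chains; that is, $X$ can be partitioned into finitely many subsets, each of which, with the induced order, is either a one-element partial order, or a countably infinite set $\{x_1,x_2,\dots\}$ with $x_i\le x_j$ iff $i\le j$, or one with $x_i\le x_j$ iff $i\ge j$, or a countably infinite anti-chain.
   Context: A structure $(X,\le)$ is unary FA-presentable if there exist a regular language $L\subseteq a^*$ over a one-letter alphabet and a surjection $\phi:L\to X$ such that $\{(u,v)\in L^2: u\phi=v\phi\}$ and $\{(u,v)\in L^2:u\phi\le v\phi\}$ are regular relations, i.e. the corresponding sets of words $\mathrm{conv}(u,v)$ over $\{a,\$\}^2$ (reading $u,v$ in parallel, padding the shorter with $\$$) are regular languages. *)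

theory Defs
  imports Main "HOL-Library.Disjoint_Sets"
begin

definition regular_lang :: "'s list set \<Rightarrow> bool" where
  "regular_lang L \<longleftrightarrow>
     (\<exists>(Q::nat set) q0 (\<delta>::nat \<Rightarrow> 's \<Rightarrow> nat) F.
        finite Q \<and> q0 \<in> Q \<and> (\<forall>q\<in>Q. \<forall>c. \<delta> q c \<in> Q) \<and> F \<subseteq> Q \<and>
        L = {w. foldl \<delta> q0 w \<in> F})"

text \<open>Convolution of two words: read in parallel, the shorter one padded with the
  padding symbol \$, here represented by None.\<close>

definition conv :: "'s list \<Rightarrow> 's list \<Rightarrow> ('s option \<times> 's option) list" where
  "conv u v = map (\<lambda>i. (if i < length u then Some (u ! i) else None,
                         if i < length v then Some (v ! i) else None))
                  [0..<max (length u) (length v)]"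

text \<open>Unary alphabet {a}: words are unit lists (a^n = replicate n ()).\<close>

definition unary_FA_presentable :: "'b set \<Rightarrow> 'b rel \<Rightarrow> bool" where
  "unary_FA_presentable X r \<longleftrightarrow>
     (\<exists>(L::unit list set) (\<phi>::unit list \<Rightarrow> 'b).
        regular_lang L \<and> \<phi> ` L = X \<and>
        regular_lang {conv u v | u v. u \<in> L \<and> v \<in> L \<and> \<phi> u = \<phi> v} \<and>
        regular_lang {conv u v | u v. u \<in> L \<and> v \<in> L \<and> (\<phi> u, \<phi> v) \<in> r})"

end

theory Submission
  imports Defs "HOL-Library.Infinite_Set"
begin

text \<open>
  Under a unary presentation an element of X is coded by a length n with a^n in L, and
  equality and the order become relations on lengths recognised by automata reading
  conv a^m a^n. Iterating one letter in a finite automaton is eventually periodic, so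
  membership of lengths, and each relation evaluated at (m, m + d) or at (m + d, m), is
  eventually periodic both in the base m and in the gap d, with a common threshold T and
  period p \<ge> T. The least codes of the elements then form an eventually periodic set of
  lengths. Codes below the threshold give one-element pieces; beyond it each residue class
  mod p is empty or infinite, and on it whether one code is below another depends only on
  which of the two is smaller, so the class is an ascending chain, a descending chain or
  an antichain.
\<close>

section \<open>Eventually periodic functions and relations\<close>

definition periodic_from :: "nat \<Rightarrow> nat \<Rightarrow> (nat \<Rightarrow> 'a) \<Rightarrow> bool" where
  "periodic_from T p f \<longleftrightarrow> (\<forall>n\<ge>T. f (n + p) = f n)"

lemma periodic_from_add_mult:
  assumes "periodic_from T p f" and "T \<le> n"
  shows "f (n + k * p) = f n"
proof (induction k)
  case (Suc k)
  have "f (n + Suc k * p) = f (n + k * p + p)"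
    by (simp add: ac_simps)
  also have "\<dots> = f (n + k * p)"
    using assms unfolding periodic_from_def by simp
  finally show ?case using Suc by simp
qed simp

lemma periodic_from_mono:
  assumes "periodic_from T p f" and "T \<le> T'" and "p dvd p'"
  shows "periodic_from T' p' f"
proof -
  obtain k where "p' = k * p" using assms(3) by (metis dvdE mult.commute)
  then show ?thesis
    using periodic_from_add_mult[OF assms(1)] assms(2) unfolding periodic_from_def by simp
qed

lemma periodic_from_mod:
  assumes "periodic_from T p f" and "T \<le> m" and "T \<le> n" and "m mod p = n mod p"
  shows "f m = f n"
proof -
  have "f k = f l" if le: "T \<le> k" "k \<le> l" and cong: "k mod p = l mod p" for k l
  proof -
    obtain q where "l = k + p * q" using mod_eq_nat2E[OF cong le(2)] .
    then show ?thesis using periodic_from_add_mult[OF assms(1) le(1), of q] by (simp add: mult.commute)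
  qed
  from this[of m n] this[of n m] show ?thesis using assms(2-4) by fastforce
qed

lemma periodic_from_combine:
  "periodic_from T p f \<Longrightarrow> periodic_from T p h \<Longrightarrow> periodic_from T p (\<lambda>n. F (f n) (h n))"
  unfolding periodic_from_def by simp

definition rel_periodic_from :: "nat \<Rightarrow> nat \<Rightarrow> (nat \<Rightarrow> nat \<Rightarrow> bool) \<Rightarrow> bool" where
  "rel_periodic_from T p S \<longleftrightarrow>
     (\<forall>d. periodic_from T p (\<lambda>m. S m (m + d)) \<and> periodic_from T p (\<lambda>m. S (m + d) m)) \<and>
     (\<forall>m. periodic_from T p (\<lambda>d. S m (m + d)) \<and> periodic_from T p (\<lambda>d. S (m + d) m))"

lemma rel_periodic_fromD:
  assumes "rel_periodic_from T p S"
  shows "periodic_from T p (\<lambda>m. S m (m + d))" "periodic_from T p (\<lambda>m. S (m + d) m)"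
    and "periodic_from T p (\<lambda>d. S m (m + d))" "periodic_from T p (\<lambda>d. S (m + d) m)"
  using assms unfolding rel_periodic_from_def by blast+

lemma rel_periodic_from_mono:
  assumes "rel_periodic_from T p S" and "T \<le> T'" and "p dvd p'"
  shows "rel_periodic_from T' p' S"
  unfolding rel_periodic_from_def
  by (intro conjI allI periodic_from_mono[OF _ assms(2,3)] rel_periodic_fromD[OF assms(1)])

lemma rel_periodic_from_congruent:
  assumes S: "rel_periodic_from T p S" and "T \<le> p"
    and "T \<le> m" "m < n" "m mod p = n mod p"
    and "T \<le> m'" "m' < n'" "m' mod p = n' mod p" "m mod p = m' mod p"
  shows "S m n = S m' n' \<and> S n m = S n' m'"
proof -
  have gap: "S k l = S k (k + p) \<and> S l k = S (k + p) k"
    if "k < l" "k mod p = l mod p" for k l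
  proof -
    have "p dvd l - k" using that mod_eq_dvd_iff_nat[of k l p] by simp
    moreover have "l - k > 0" using that by simp
    ultimately have "p \<le> l - k" by (rule dvd_imp_le)
    then have "T \<le> l - k" and "(l - k) mod p = p mod p"
      using \<open>p dvd l - k\<close> \<open>T \<le> p\<close> by simp_all
    then have "S k (k + (l - k)) = S k (k + p) \<and> S (k + (l - k)) k = S (k + p) k"
      using periodic_from_mod[OF rel_periodic_fromD(3)[OF S], of "l - k" p]
        periodic_from_mod[OF rel_periodic_fromD(4)[OF S], of "l - k" p] \<open>T \<le> p\<close> by blast
    with that show ?thesis by simp
  qed
  have "S m (m + p) = S m' (m' + p) \<and> S (m + p) m = S (m' + p) m'"
    using periodic_from_mod[OF rel_periodic_fromD(1)[OF S], of m m']
      periodic_from_mod[OF rel_periodic_fromD(2)[OF S], of m m'] assms(3,6,9) by blast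
  with gap[of m n] gap[of m' n'] assms show ?thesis by simp
qed

lemma rel_periodic_from_enumerate:
  assumes S: "rel_periodic_from T p S" and "T \<le> p"
    and J: "infinite J" "\<forall>n\<in>J. T \<le> n \<and> n mod p = c"
  shows "\<exists>\<alpha> \<beta>. \<forall>i j. i < j \<longrightarrow>
           (S (enumerate J i) (enumerate J j) \<longleftrightarrow> \<alpha>) \<and> (S (enumerate J j) (enumerate J i) \<longleftrightarrow> \<beta>)"
proof (intro exI allI impI)
  fix i j :: nat assume "i < j"
  have "enumerate J k \<in> J" for k using J(1) by (rule enumerate_in_set)
  with rel_periodic_from_congruent[OF S \<open>T \<le> p\<close>] enumerate_mono[OF \<open>i < j\<close> J(1)]
    enumerate_mono[of 0 1 J] J
  show "(S (enumerate J i) (enumerate J j) \<longleftrightarrow> S (enumerate J 0) (enumerate J 1)) \<and>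
        (S (enumerate J j) (enumerate J i) \<longleftrightarrow> S (enumerate J 1) (enumerate J 0))"
    by simp
qed

section \<open>Unary automata\<close>

lemma regular_langE:
  assumes "regular_lang L"
  obtains Q :: "nat set" and q0 \<delta> F
  where "finite Q" "q0 \<in> Q" "\<forall>q\<in>Q. \<forall>c. \<delta> q c \<in> Q" "L = {w. foldl \<delta> q0 w \<in> F}"
  using assms unfolding regular_lang_def by blast

lemma foldl_closed: "\<forall>q\<in>Q. \<forall>c. \<delta> q c \<in> Q \<Longrightarrow> q \<in> Q \<Longrightarrow> foldl \<delta> q w \<in> Q"
  by (induction w arbitrary: q) auto

lemma foldl_replicate_eventually_periodic:
  assumes "finite Q" and closed: "\<forall>q\<in>Q. \<forall>c. \<delta> q c \<in> Q" and "finite C"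
  shows "\<exists>T p. p > 0 \<and> (\<forall>c\<in>C. \<forall>q\<in>Q. periodic_from T p (\<lambda>n. foldl \<delta> q (replicate n c)))"
proof -
  define s where "s n = (\<lambda>(c, q) \<in> C \<times> Q. foldl \<delta> q (replicate n c))" for n
  have "s n \<in> C \<times> Q \<rightarrow>\<^sub>E Q" for n
    unfolding s_def by (rule restrict_PiE_iff[THEN iffD2]) (auto intro: foldl_closed[OF closed])
  then have "range s \<subseteq> C \<times> Q \<rightarrow>\<^sub>E Q" by blast
  moreover have "finite (C \<times> Q \<rightarrow>\<^sub>E Q)"
    using assms by (simp add: finite_PiE)
  ultimately have "\<not> inj s"
    using finite_subset infinite_UNIV_nat finite_imageD by blast
  then obtain a b where "a < b" and "s a = s b"
    unfolding inj_def by (metis linorder_neqE_nat)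
  have loop: "foldl \<delta> q (replicate b c) = foldl \<delta> q (replicate a c)" if "c \<in> C" "q \<in> Q" for c q
  proof -
    have "s b (c, q) = s a (c, q)" using \<open>s a = s b\<close> by simp
    then show ?thesis using that by (simp add: s_def)
  qed
  have "periodic_from a (b - a) (\<lambda>n. foldl \<delta> q (replicate n c))" if "c \<in> C" "q \<in> Q" for c q
    unfolding periodic_from_def
  proof (intro allI impI)
    fix n assume "a \<le> n"
    then have "replicate (n + (b - a)) c = replicate b c @ replicate (n - a) c"
      and "replicate n c = replicate a c @ replicate (n - a) c"
      using \<open>a < b\<close> by (simp_all flip: replicate_add)
    then show "foldl \<delta> q (replicate (n + (b - a)) c) = foldl \<delta> q (replicate n c)"
      using loop[OF that] by simp
  qed
  with \<open>a < b\<close> show ?thesis by (intro exI[of _ a] exI[of _ "b - a"]) simp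
qed

lemma unary_regular_lang_periodic:
  assumes "regular_lang (L :: unit list set)"
  shows "\<exists>T p. p > 0 \<and> periodic_from T p (\<lambda>n. replicate n () \<in> L)"
proof -
  obtain Q :: "nat set" and q0 \<delta> F
    where D: "finite Q" "q0 \<in> Q" "\<forall>q\<in>Q. \<forall>c. \<delta> q c \<in> Q" "L = {w. foldl \<delta> q0 w \<in> F}"
    using assms by (rule regular_langE)
  obtain T p where "p > 0" and "periodic_from T p (\<lambda>n. foldl \<delta> q0 (replicate n ()))"
    using foldl_replicate_eventually_periodic[OF D(1,3), of "{()}"] D(2) by auto
  then have "periodic_from T p (\<lambda>n. replicate n () \<in> L)"
    unfolding D(4) periodic_from_def by simp
  with \<open>p > 0\<close> show ?thesis by blast
qed

lemma conv_replicate_le: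
  "conv (replicate m a) (replicate (m + d) b) = replicate m (Some a, Some b) @ replicate d (None, Some b)"
  unfolding conv_def by (rule nth_equalityI) (auto simp: nth_append)

lemma conv_replicate_ge:
  "conv (replicate (m + d) a) (replicate m b) = replicate m (Some a, Some b) @ replicate d (Some a, None)"
  unfolding conv_def by (rule nth_equalityI) (auto simp: nth_append)

lemma map_fst_conv: "map fst (conv u v) = map Some u @ replicate (length v - length u) None"
  unfolding conv_def by (rule nth_equalityI) (auto simp: nth_append)

lemma map_snd_conv: "map snd (conv u v) = map Some v @ replicate (length u - length v) None"
  unfolding conv_def by (rule nth_equalityI) (auto simp: nth_append)

lemma conv_inject: "conv u v = conv u' v' \<longleftrightarrow> u = u' \<and> v = v'"
proof
  assume eq: "conv u v = conv u' v'"
  have "map Some u = map Some u'"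
    using arg_cong[OF eq, of "\<lambda>w. filter (\<lambda>x. x \<noteq> None) (map fst w)"]
    by (simp add: map_fst_conv filter_map comp_def filter_replicate)
  moreover have "map Some v = map Some v'"
    using arg_cong[OF eq, of "\<lambda>w. filter (\<lambda>x. x \<noteq> None) (map snd w)"]
    by (simp add: map_snd_conv filter_map comp_def filter_replicate)
  ultimately show "u = u' \<and> v = v'" by simp
qed simp

definition unary_rel :: "(unit option \<times> unit option) list set \<Rightarrow> nat \<Rightarrow> nat \<Rightarrow> bool" where
  "unary_rel A m n \<longleftrightarrow> conv (replicate m ()) (replicate n ()) \<in> A"

lemma unary_rel_conv_image:
  "unary_rel {conv u v | u v. u \<in> L \<and> v \<in> L \<and> P u v} m n \<longleftrightarrow>
     replicate m () \<in> L \<and> replicate n () \<in> L \<and> P (replicate m ()) (replicate n ())"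
  by (auto simp: unary_rel_def conv_inject)

lemma unary_rel_periodic:
  assumes "regular_lang A"
  shows "\<exists>T p. p > 0 \<and> rel_periodic_from T p (unary_rel A)"
proof -
  obtain Q :: "nat set" and q0 \<delta> F
    where D: "finite Q" "q0 \<in> Q" "\<forall>q\<in>Q. \<forall>c. \<delta> q c \<in> Q" "A = {w. foldl \<delta> q0 w \<in> F}"
    using assms by (rule regular_langE)
  define both where "both = (Some (), Some ())"
  define right where "right = (None :: unit option, Some ())"
  define left where "left = (Some (), None :: unit option)"
  obtain T p where "p > 0" and per:
    "\<forall>c\<in>{both, right, left}. \<forall>q\<in>Q. periodic_from T p (\<lambda>n. foldl \<delta> q (replicate n c))"
    using foldl_replicate_eventually_periodic[OF D(1,3), of "{both, right, left}"] by auto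
  have up: "unary_rel A m (m + d) \<longleftrightarrow> foldl \<delta> (foldl \<delta> q0 (replicate m both)) (replicate d right) \<in> F"
    and down: "unary_rel A (m + d) m \<longleftrightarrow> foldl \<delta> (foldl \<delta> q0 (replicate m both)) (replicate d left) \<in> F"
    for m d
    by (simp_all add: unary_rel_def D(4) conv_replicate_le conv_replicate_ge both_def right_def left_def)
  have "foldl \<delta> q0 (replicate m both) \<in> Q" for m
    using foldl_closed[OF D(3) D(2)] .
  with per D(2) have "rel_periodic_from T p (unary_rel A)"
    unfolding rel_periodic_from_def periodic_from_def up down by simp
  with \<open>p > 0\<close> show ?thesis by blast
qed

lemma unary_FA_presentable_periodic:
  assumes "unary_FA_presentable X r"
  obtains Ls :: "nat set" and g :: "nat \<Rightarrow> 'b" and T p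
  where "p > 0" "T \<le> p" "g ` Ls = X" "periodic_from T p (\<lambda>n. n \<in> Ls)"
    "rel_periodic_from T p (\<lambda>m n. m \<in> Ls \<and> n \<in> Ls \<and> g m = g n)"
    "rel_periodic_from T p (\<lambda>m n. m \<in> Ls \<and> n \<in> Ls \<and> (g m, g n) \<in> r)"
proof -
  obtain L :: "unit list set" and \<phi> :: "unit list \<Rightarrow> 'b"
    where L: "regular_lang L" and "\<phi> ` L = X"
      and E: "regular_lang {conv u v | u v. u \<in> L \<and> v \<in> L \<and> \<phi> u = \<phi> v}"
      and R: "regular_lang {conv u v | u v. u \<in> L \<and> v \<in> L \<and> (\<phi> u, \<phi> v) \<in> r}"
    using assms unfolding unary_FA_presentable_def by blast
  define Ls where "Ls = {n. replicate n () \<in> L}"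
  define g where "g n = \<phi> (replicate n ())" for n
  have unit_word: "replicate (length u) () = u" for u :: "unit list"
    by (rule replicate_length_same) simp
  have "g ` Ls = \<phi> ` L"
    unfolding Ls_def g_def by (auto simp: image_iff) (metis unit_word)
  obtain T1 p1 where "p1 > 0" and per_L: "periodic_from T1 p1 (\<lambda>n. n \<in> Ls)"
    using unary_regular_lang_periodic[OF L] unfolding Ls_def by auto
  obtain T2 p2 where "p2 > 0" and per_E: "rel_periodic_from T2 p2 (\<lambda>m n. m \<in> Ls \<and> n \<in> Ls \<and> g m = g n)"
    using unary_rel_periodic[OF E] unfolding unary_rel_conv_image Ls_def g_def by auto
  obtain T3 p3 where "p3 > 0"
    and per_R: "rel_periodic_from T3 p3 (\<lambda>m n. m \<in> Ls \<and> n \<in> Ls \<and> (g m, g n) \<in> r)"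
    using unary_rel_periodic[OF R] unfolding unary_rel_conv_image Ls_def g_def by auto
  define T where "T = max T1 (max T2 T3)"
  define p where "p = (T + 1) * (p1 * p2 * p3)"
  have "1 \<le> p1 * p2 * p3"
    using \<open>p1 > 0\<close> \<open>p2 > 0\<close> \<open>p3 > 0\<close> by simp
  then have "(T + 1) * 1 \<le> p"
    unfolding p_def by (rule mult_le_mono2)
  show thesis
  proof (rule that)
    show "p > 0" "T \<le> p"
      using \<open>(T + 1) * 1 \<le> p\<close> by simp_all
    show "g ` Ls = X" using \<open>g ` Ls = \<phi> ` L\<close> \<open>\<phi> ` L = X\<close> by simp
    show "periodic_from T p (\<lambda>n. n \<in> Ls)"
      using per_L by (rule periodic_from_mono) (simp_all add: T_def p_def)
    show "rel_periodic_from T p (\<lambda>m n. m \<in> Ls \<and> n \<in> Ls \<and> g m = g n)"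
      using per_E by (rule rel_periodic_from_mono) (simp_all add: T_def p_def)
    show "rel_periodic_from T p (\<lambda>m n. m \<in> Ls \<and> n \<in> Ls \<and> (g m, g n) \<in> r)"
      using per_R by (rule rel_periodic_from_mono) (simp_all add: T_def p_def)
  qed
qed

section \<open>Least preimages\<close>

text \<open>
  A witness m < n is moved by shifting the gap n - m if it is at least T and by shifting
  the base m otherwise; the threshold 2T + p keeps the base above T in the second case.
\<close>

lemma periodic_from_exists_smaller:
  assumes E: "rel_periodic_from T p E"
  shows "periodic_from (2 * T + p) p (\<lambda>n. \<exists>m<n. E m n)"
  unfolding periodic_from_def
proof (intro allI impI)
  fix n assume n: "2 * T + p \<le> n"
  have shift_base: "E (m + p) (k + p) = E m k" if "T \<le> m" "m \<le> k" for m k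
    using rel_periodic_fromD(1)[OF E, of "k - m"] that unfolding periodic_from_def
    by (metis add.commute le_add_diff_inverse add.left_commute)
  have shift_gap: "E m (k + p) = E m k" if "m \<le> k" "T \<le> k - m" for m k
    using rel_periodic_fromD(3)[OF E, of m] that unfolding periodic_from_def
    by (metis add.assoc le_add_diff_inverse)
  show "(\<exists>m<n + p. E m (n + p)) = (\<exists>m<n. E m n)"
  proof
    assume "\<exists>m<n. E m n"
    then obtain m where "m < n" "E m n" by blast
    show "\<exists>m<n + p. E m (n + p)"
    proof (cases "T \<le> n - m")
      case True
      then show ?thesis
        using shift_gap[of m n] \<open>m < n\<close> \<open>E m n\<close> by (intro exI[of _ m]) simp
    next
      case False
      then show ?thesis
        using shift_base[of m n] \<open>m < n\<close> \<open>E m n\<close> n by (intro exI[of _ "m + p"]) simp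
    qed
  next
    assume "\<exists>m<n + p. E m (n + p)"
    then obtain m where "m < n + p" "E m (n + p)" by blast
    show "\<exists>m<n. E m n"
    proof (cases "m < n \<and> T \<le> n - m")
      case True
      then show ?thesis
        using shift_gap[of m n] \<open>E m (n + p)\<close> by (intro exI[of _ m]) simp
    next
      case False
      then have "T + p \<le> m" using n by auto
      then show ?thesis
        using shift_base[of "m - p" n] \<open>m < n + p\<close> \<open>E m (n + p)\<close>
        by (intro exI[of _ "m - p"]) simp
    qed
  qed
qed

definition least_preimages :: "nat set \<Rightarrow> (nat \<Rightarrow> 'b) \<Rightarrow> nat set" where
  "least_preimages A g = {n \<in> A. \<forall>m\<in>A. m < n \<longrightarrow> g m \<noteq> g n}"

lemma inj_on_least_preimages: "inj_on g (least_preimages A g)"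
proof (rule inj_onI)
  fix m n assume reps: "m \<in> least_preimages A g" "n \<in> least_preimages A g" and "g m = g n"
  show "m = n"
  proof (rule ccontr)
    assume "m \<noteq> n"
    then consider "m < n" | "n < m" by linarith
    then show False
      using reps \<open>g m = g n\<close> unfolding least_preimages_def by cases auto
  qed
qed

lemma image_least_preimages: "g ` least_preimages A g = g ` A"
proof
  show "g ` A \<subseteq> g ` least_preimages A g"
  proof
    fix x assume "x \<in> g ` A"
    define n where "n = (LEAST n. n \<in> A \<and> g n = x)"
    have "n \<in> A \<and> g n = x"
      unfolding n_def by (rule LeastI_ex) (use \<open>x \<in> g ` A\<close> in blast)
    moreover have "g m \<noteq> x" if "m \<in> A" "m < n" for m
      using not_less_Least[OF \<open>m < n\<close>[unfolded n_def]] that by blast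
    ultimately show "x \<in> g ` least_preimages A g"
      unfolding least_preimages_def by auto
  qed
qed (auto simp: least_preimages_def)

lemma periodic_from_least_preimages:
  assumes "periodic_from T p (\<lambda>n. n \<in> A)"
    and "rel_periodic_from T p (\<lambda>m n. m \<in> A \<and> n \<in> A \<and> g m = g n)"
  shows "periodic_from (2 * T + p) p (\<lambda>n. n \<in> least_preimages A g)"
proof -
  have "periodic_from (2 * T + p) p (\<lambda>n. n \<in> A)"
    using assms(1) by (rule periodic_from_mono) simp_all
  moreover have "periodic_from (2 * T + p) p (\<lambda>n. \<exists>m<n. m \<in> A \<and> n \<in> A \<and> g m = g n)"
    using assms(2) by (rule periodic_from_exists_smaller)
  ultimately have "periodic_from (2 * T + p) p
      (\<lambda>n. n \<in> A \<and> \<not> (\<exists>m<n. m \<in> A \<and> n \<in> A \<and> g m = g n))"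
    by (rule periodic_from_combine)
  moreover have "n \<in> least_preimages A g \<longleftrightarrow> n \<in> A \<and> \<not> (\<exists>m<n. m \<in> A \<and> n \<in> A \<and> g m = g n)" for n
    unfolding least_preimages_def by auto
  ultimately show ?thesis by simp
qed

section \<open>Chains and antichains\<close>

definition elementary_suborder :: "'b rel \<Rightarrow> 'b set \<Rightarrow> bool" where
  "elementary_suborder r B \<longleftrightarrow> card B = 1
     \<or> (\<exists>f::nat \<Rightarrow> 'b. bij_betw f UNIV B \<and> (\<forall>i j. (f i, f j) \<in> r \<longleftrightarrow> i \<le> j))
     \<or> (\<exists>f::nat \<Rightarrow> 'b. bij_betw f UNIV B \<and> (\<forall>i j. (f i, f j) \<in> r \<longleftrightarrow> j \<le> i))
     \<or> (\<exists>f::nat \<Rightarrow> 'b. bij_betw f UNIV B \<and> (\<forall>i j. (f i, f j) \<in> r \<longleftrightarrow> i = j))"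

lemma elementary_suborder_uniform:
  fixes f :: "nat \<Rightarrow> 'b"
  assumes f: "bij_betw f UNIV B" and reflexive: "\<forall>x\<in>B. (x, x) \<in> r" and "antisym r"
    and uniform: "\<forall>i j. i < j \<longrightarrow> ((f i, f j) \<in> r \<longleftrightarrow> \<alpha>) \<and> ((f j, f i) \<in> r \<longleftrightarrow> \<beta>)"
  shows "elementary_suborder r B"
proof -
  have rel: "(f i, f j) \<in> r \<longleftrightarrow> i = j \<or> (i < j \<and> \<alpha>) \<or> (j < i \<and> \<beta>)" for i j
    using uniform reflexive bij_betwE[OF f] by (cases i j rule: linorder_cases) auto
  have "\<not> (\<alpha> \<and> \<beta>)"
  proof
    assume "\<alpha> \<and> \<beta>"
    then have "f 0 = f 1"
      using rel[of 0 1] rel[of 1 0] antisymD[OF \<open>antisym r\<close>] by simp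
    then show False
      using bij_betw_imp_inj_on[OF f] by (simp add: inj_eq)
  qed
  then have "(\<forall>i j. (f i, f j) \<in> r \<longleftrightarrow> i \<le> j) \<or> (\<forall>i j. (f i, f j) \<in> r \<longleftrightarrow> j \<le> i)
      \<or> (\<forall>i j. (f i, f j) \<in> r \<longleftrightarrow> i = j)"
    unfolding rel by (cases \<alpha>; cases \<beta>) auto
  then show ?thesis
    unfolding elementary_suborder_def using f by blast
qed

lemma elementary_suborder_residue_class:
  assumes J: "infinite J" "\<forall>n\<in>J. T \<le> n \<and> n mod p = c" and "T \<le> p"
    and S: "rel_periodic_from T p S" and g: "inj_on g J"
    and reflexive: "\<forall>x\<in>g ` J. (x, x) \<in> r" and "antisym r"
    and r_S: "\<forall>m\<in>J. \<forall>n\<in>J. (g m, g n) \<in> r \<longleftrightarrow> S m n"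
  shows "elementary_suborder r (g ` J)"
proof -
  obtain \<alpha> \<beta> where uniform: "\<forall>i j. i < j \<longrightarrow>
      (S (enumerate J i) (enumerate J j) \<longleftrightarrow> \<alpha>) \<and> (S (enumerate J j) (enumerate J i) \<longleftrightarrow> \<beta>)"
    using rel_periodic_from_enumerate[OF S \<open>T \<le> p\<close> J] by blast
  have "bij_betw (g \<circ> enumerate J) UNIV (g ` J)"
    using bij_enumerate[OF J(1)] inj_on_imp_bij_betw[OF g] by (rule bij_betw_trans)
  moreover have "enumerate J i \<in> J" for i
    using J(1) by (rule enumerate_in_set)
  then have "\<forall>i j. i < j \<longrightarrow> (((g \<circ> enumerate J) i, (g \<circ> enumerate J) j) \<in> r \<longleftrightarrow> \<alpha>)
      \<and> (((g \<circ> enumerate J) j, (g \<circ> enumerate J) i) \<in> r \<longleftrightarrow> \<beta>)"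
    using uniform r_S by simp
  ultimately show ?thesis
    using elementary_suborder_uniform reflexive \<open>antisym r\<close> by blast
qed

lemma infinite_residue_class:
  assumes "periodic_from N p (\<lambda>n. n \<in> M)" and "p > 0" and "a \<in> M" "N \<le> a"
  shows "infinite {n \<in> M. N \<le> n \<and> n mod p = a mod p}"
proof (rule infinite_super)
  show "range (\<lambda>k. a + k * p) \<subseteq> {n \<in> M. N \<le> n \<and> n mod p = a mod p}"
    using periodic_from_add_mult[OF assms(1,4)] assms(3,4) by auto
  show "infinite (range (\<lambda>k. a + k * p))"
    using \<open>p > 0\<close> by (intro range_inj_infinite) (simp add: inj_def)
qed

lemma partition_on_image_fibres:
  assumes "inj_on g A"
  shows "partition_on (g ` A) ((\<lambda>i. g ` {x \<in> A. f x = i}) ` f ` A)"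
proof (rule partition_onI)
  fix B B' assume "B \<in> (\<lambda>i. g ` {x \<in> A. f x = i}) ` f ` A" "B' \<in> (\<lambda>i. g ` {x \<in> A. f x = i}) ` f ` A"
    and "B \<noteq> B'"
  then obtain a a' where B: "B = g ` {x \<in> A. f x = f a}" "B' = g ` {x \<in> A. f x = f a'}"
    by auto
  with \<open>B \<noteq> B'\<close> have "f a \<noteq> f a'" by auto
  show "disjnt B B'"
    unfolding disjnt_def
  proof (rule equals0I)
    fix z assume "z \<in> B \<inter> B'"
    then obtain x x' where "x \<in> A" "x' \<in> A" "f x = f a" "f x' = f a'" "g x = g x'"
      unfolding B by auto
    then have "x = x'" using inj_onD[OF assms] by blast
    then show False
      using \<open>f x = f a\<close> \<open>f x' = f a'\<close> \<open>f a \<noteq> f a'\<close> by simp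
  qed
qed auto

lemma elementary_partition_of_periodic:
  assumes M: "periodic_from N p (\<lambda>n. n \<in> M)" and "p > 0" "T \<le> N" "T \<le> p"
    and S: "rel_periodic_from T p S" and g: "inj_on g M"
    and reflexive: "\<forall>x\<in>g ` M. (x, x) \<in> r" and "antisym r"
    and r_S: "\<forall>m\<in>M. \<forall>n\<in>M. (g m, g n) \<in> r \<longleftrightarrow> S m n"
  shows "\<exists>P. finite P \<and> partition_on (g ` M) P \<and> (\<forall>B\<in>P. elementary_suborder r B)"
proof (intro exI conjI ballI)
  define idx where "idx n = (if n < N then Inl n else Inr (n mod p))" for n
  define P where "P = (\<lambda>i. g ` {n \<in> M. idx n = i}) ` idx ` M"
  have "idx ` M \<subseteq> Inl ` {..<N} \<union> Inr ` {..<p}"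
    using \<open>p > 0\<close> by (auto simp: idx_def)
  then have "finite (idx ` M)"
    by (rule finite_subset) simp
  then show "finite P"
    unfolding P_def by simp
  show "partition_on (g ` M) P"
    unfolding P_def using g by (rule partition_on_image_fibres)
  fix B assume "B \<in> P"
  then obtain a where "a \<in> M" and B: "B = g ` {n \<in> M. idx n = idx a}"
    unfolding P_def by blast
  show "elementary_suborder r B"
  proof (cases "a < N")
    case True
    then have "B = {g a}" using B \<open>a \<in> M\<close> by (auto simp: idx_def split: if_splits)
    then show ?thesis by (simp add: elementary_suborder_def)
  next
    case False
    define J where "J = {n \<in> M. N \<le> n \<and> n mod p = a mod p}"
    have "B = g ` J" using B False by (auto simp: idx_def J_def split: if_splits)
    have "J \<subseteq> M" by (auto simp: J_def)
    have "infinite J"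
      unfolding J_def using infinite_residue_class[OF M \<open>p > 0\<close> \<open>a \<in> M\<close>] False by simp
    moreover have "\<forall>n\<in>J. T \<le> n \<and> n mod p = a mod p"
      using \<open>T \<le> N\<close> by (auto simp: J_def)
    moreover have "\<forall>x\<in>g ` J. (x, x) \<in> r"
      using reflexive \<open>J \<subseteq> M\<close> by blast
    moreover have "\<forall>m\<in>J. \<forall>n\<in>J. (g m, g n) \<in> r \<longleftrightarrow> S m n"
      using r_S \<open>J \<subseteq> M\<close> by blast
    ultimately show ?thesis
      unfolding \<open>B = g ` J\<close>
      using elementary_suborder_residue_class[OF _ _ \<open>T \<le> p\<close> S inj_on_subset[OF g \<open>J \<subseteq> M\<close>]
          _ \<open>antisym r\<close>] by blast
  qed
qed

theorem corollary5p11: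
  fixes X :: "'b set" and r :: "'b rel"
  assumes "partial_order_on X r" and "r \<subseteq> X \<times> X"
    and "unary_FA_presentable X r"
  shows "\<exists>P. finite P \<and> partition_on X P \<and>
           (\<forall>S\<in>P. card S = 1
              \<or> (\<exists>f::nat \<Rightarrow> 'b. bij_betw f UNIV S \<and> (\<forall>i j. (f i, f j) \<in> r \<longleftrightarrow> i \<le> j))
              \<or> (\<exists>f::nat \<Rightarrow> 'b. bij_betw f UNIV S \<and> (\<forall>i j. (f i, f j) \<in> r \<longleftrightarrow> j \<le> i))
              \<or> (\<exists>f::nat \<Rightarrow> 'b. bij_betw f UNIV S \<and> (\<forall>i j. (f i, f j) \<in> r \<longleftrightarrow> i = j)))"
proof -
  \<comment> \<open>The hypothesis r \<subseteq> X \<times> X is already contained in partial_order_on X r.\<close>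
  obtain Ls :: "nat set" and g :: "nat \<Rightarrow> 'b" and T p
    where "p > 0" "T \<le> p" "g ` Ls = X" "periodic_from T p (\<lambda>n. n \<in> Ls)"
      "rel_periodic_from T p (\<lambda>m n. m \<in> Ls \<and> n \<in> Ls \<and> g m = g n)"
      and per_R: "rel_periodic_from T p (\<lambda>m n. m \<in> Ls \<and> n \<in> Ls \<and> (g m, g n) \<in> r)"
    using assms(3) by (rule unary_FA_presentable_periodic)
  define M where "M = least_preimages Ls g"
  have "g ` M = X" unfolding M_def image_least_preimages by fact
  have per_M: "periodic_from (2 * T + p) p (\<lambda>n. n \<in> M)"
    unfolding M_def by (rule periodic_from_least_preimages) fact+
  have reflexive: "\<forall>x\<in>g ` M. (x, x) \<in> r"
    using partial_order_onD(1)[OF assms(1)] \<open>g ` M = X\<close> by (simp add: refl_on_def)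
  have r_R: "\<forall>m\<in>M. \<forall>n\<in>M. (g m, g n) \<in> r \<longleftrightarrow> m \<in> Ls \<and> n \<in> Ls \<and> (g m, g n) \<in> r"
    by (auto simp: M_def least_preimages_def)
  have "\<exists>P. finite P \<and> partition_on (g ` M) P \<and> (\<forall>B\<in>P. elementary_suborder r B)"
    by (rule elementary_partition_of_periodic[OF per_M \<open>p > 0\<close> _ \<open>T \<le> p\<close> per_R _ reflexive
          partial_order_onD(3)[OF assms(1)] r_R])
      (simp_all add: M_def inj_on_least_preimages)
  then show ?thesis
    unfolding \<open>g ` M = X\<close> elementary_suborder_def by blast
qed

end
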